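(* Let $\Pi\in\mathcal P_\infty$ and $n\in\mathbb N\cup\{\infty\}$. Then the random labelled poset $P(n,W)$ on $[n]$ has the same distribution for every kernel $W$ (on any ordered probability space) with $\Pi_W=\Pi$.
   Context: A poset is a nonempty set with a strict partial order $<$. For finite posets $Q,P$, $t(Q,P)$ is the proportion of all maps $\varphi$ from the ground set of $Q$ to that of $P$ with $x<_Qy\Rightarrow\varphi(x)<_P\varphi(y)$. Let $\mathcal P$ be the set of isomorphism classes of finite nonempty posets; identify $\mathcal P$ with its (injective) image under $P\mapsto((t(Q,P))_{Q\in\mathcal P},|P|^{-1})\in[0,1]^{\mathcal P}\times[0,1]$, let $\overline{\mathcal P}$ be the closure (product topology) and $\mathcal P_\infty=\overline{\mathcal P}\setminus\mathcal P$. The functions $t(Q,\cdot)$ extend continuously to $\overline{\mathcal P}$, and an element of $\mathcal P_\infty$ is determined by the values $t(Q,\cdot)$, $Q\in\mathcal P$. An ordered probability space $(\mathcal S,\mathcal F,\mu,\prec)$ is a probability space with a strict partial order $\prec$ such that $\{(x,y):x\prec y\}\in\mathcal F\times\mathcal F$. A kernel on it is a measurable $W:\mathcal S^2\to[0,1]$ such that for all $x,y,z$: $W(x,y)>0\Rightarrow x\prec y$, and ($W(x,y)>0$, $W(y,z)>0$) $\Rightarrow W(x,z)=1$. For a kernel $W$, $\Pi_W$ denotes the (existing, unique) element of $\mathcal P_\infty$ with $t(Q,\Pi_W)=\int\prod_{(i,j):i<_Qj}W(x_i,x_j)\,d\mu(x_1)\cdots d\mu(x_{|Q|})$ for all finite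 posets $Q$ on $\{1,\dots,|Q|\}$. For $n\in\mathbb N\cup\{\infty\}$, $[n]=\{1,\dots,n\}$ ($[\infty]=\mathbb N$), and $P(n,W)$ is the random poset on $[n]$ obtained from i.i.d. $X_i\sim\mu$ and independent i.i.d. $\xi_{ij}\sim U(0,1)$ by declaring $i\prec j$ iff $\xi_{ij}<W(X_i,X_j)$. *)

theory Defs
  imports "HOL-Probability.Probability" "HOL-Library.Extended_Nat"
begin

definition ordered_prob_space :: "'a measure \<Rightarrow> ('a \<Rightarrow> 'a \<Rightarrow> bool) \<Rightarrow> bool" where
  "ordered_prob_space M lt \<longleftrightarrow>
     prob_space M \<and>
     (\<forall>x. \<not> lt x x) \<and>
     (\<forall>x y z. lt x y \<longrightarrow> lt y z \<longrightarrow> lt x z) \<and>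
     {(x, y). lt x y} \<inter> space (M \<Otimes>\<^sub>M M) \<in> sets (M \<Otimes>\<^sub>M M)"

definition poset_kernel :: "'a measure \<Rightarrow> ('a \<Rightarrow> 'a \<Rightarrow> bool) \<Rightarrow> ('a \<Rightarrow> 'a \<Rightarrow> real) \<Rightarrow> bool" where
  "poset_kernel M lt W \<longleftrightarrow>
     ordered_prob_space M lt \<and>
     (\<lambda>(x, y). W x y) \<in> borel_measurable (M \<Otimes>\<^sub>M M) \<and>
     (\<forall>x y. 0 \<le> W x y \<and> W x y \<le> 1) \<and>
     (\<forall>x y. W x y > 0 \<longrightarrow> lt x y) \<and>
     (\<forall>x y z. W x y > 0 \<longrightarrow> W y z > 0 \<longrightarrow> W x z = 1)"

text \<open>A finite (nonempty) poset on the ground set {1..k}, given by its strict order Q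
  (values of Q outside {1..k} are irrelevant).\<close>
definition finite_poset_on :: "nat \<Rightarrow> (nat \<Rightarrow> nat \<Rightarrow> bool) \<Rightarrow> bool" where
  "finite_poset_on k Q \<longleftrightarrow> k \<ge> 1 \<and>
     (\<forall>i\<in>{1..k}. \<not> Q i i) \<and>
     (\<forall>i\<in>{1..k}. \<forall>j\<in>{1..k}. \<forall>l\<in>{1..k}. Q i j \<longrightarrow> Q j l \<longrightarrow> Q i l)"

definition hom_density :: "'a measure \<Rightarrow> ('a \<Rightarrow> 'a \<Rightarrow> real) \<Rightarrow> nat \<Rightarrow> (nat \<Rightarrow> nat \<Rightarrow> bool) \<Rightarrow> real" where
  "hom_density M W k Q =
     (\<integral>x. (\<Prod>(i, j)\<in>{(i, j). i \<in> {1..k} \<and> j \<in> {1..k} \<and> Q i j}. W (x i) (x j))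
        \<partial>(PiM {1..k} (\<lambda>_. M)))"

definition label_set :: "enat \<Rightarrow> nat set" where
  "label_set n = {i. 1 \<le> i \<and> enat i \<le> n}"

text \<open>Underlying probability space: i.i.d. X_i ~ mu (i in N) and independent
  i.i.d. xi_ij ~ U(0,1).\<close>
definition sample_space :: "'a measure \<Rightarrow> ((nat \<Rightarrow> 'a) \<times> (nat \<times> nat \<Rightarrow> real)) measure" where
  "sample_space M = PiM UNIV (\<lambda>_::nat. M) \<Otimes>\<^sub>M
                     PiM UNIV (\<lambda>_::nat \<times> nat. uniform_measure lborel {0..1::real})"

text \<open>The random poset P(n,W) as a relation on N (false outside [n]):
  i \<prec> j iff xi_ij < W(X_i, X_j).\<close>
definition random_poset :: "enat \<Rightarrow> ('a \<Rightarrow> 'a \<Rightarrow> real) \<Rightarrow>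
     (nat \<Rightarrow> 'a) \<times> (nat \<times> nat \<Rightarrow> real) \<Rightarrow> (nat \<times> nat \<Rightarrow> bool)" where
  "random_poset n W \<omega> = (\<lambda>(i, j). i \<in> label_set n \<and> j \<in> label_set n \<and>
                                   snd \<omega> (i, j) < W (fst \<omega> i) (fst \<omega> j))"

definition random_poset_law :: "'a measure \<Rightarrow> ('a \<Rightarrow> 'a \<Rightarrow> real) \<Rightarrow> enat \<Rightarrow>
     (nat \<times> nat \<Rightarrow> bool) measure" where
  "random_poset_law M W n =
     distr (sample_space M) (PiM UNIV (\<lambda>_::nat \<times> nat. count_space (UNIV :: bool set)))
           (random_poset n W)"

end

theory Submission
  imports Defs
begin

text \<open>The law of a random relation on \<open>\<nat> \<times> \<nat>\<close> is determined by the probabilities that it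
  contains a given finite set \<open>S\<close> of pairs, since these events form an \<open>\<inter>\<close>-stable generator.
  For \<open>S \<subseteq> [n]\<^sup>2\<close> this probability is the integral of the product of \<open>W(X\<^sub>i, X\<^sub>j)\<close>
  over \<open>(i, j) \<in> S\<close>. Because \<open>W(x,y) > 0\<close> and \<open>W(y,z) > 0\<close> force \<open>W(x,z) = 1\<close>, the product
  does not change when \<open>S\<close> is replaced by its transitive closure, so the probability is the density \<open>t(Q, \<Pi>\<^sub>W)\<close> of the
  relation \<open>Q\<close> obtained by relabelling \<open>S\<^sup>+\<close> on \<open>{1..k}\<close>. If \<open>Q\<close> is irreflexive it is a poset and
  the density only depends on \<open>\<Pi>\<^sub>W\<close>; otherwise it vanishes because \<open>W\<close> is zero on the diagonal.\<close>

lemma poset_kernel_prob_space: "poset_kernel M lt W \<Longrightarrow> prob_space M"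
  by (simp add: poset_kernel_def ordered_prob_space_def)

lemma poset_kernel_nonneg: "poset_kernel M lt W \<Longrightarrow> 0 \<le> W x y"
  by (simp add: poset_kernel_def)

lemma poset_kernel_le_1: "poset_kernel M lt W \<Longrightarrow> W x y \<le> 1"
  by (simp add: poset_kernel_def)

lemma poset_kernel_trans: "poset_kernel M lt W \<Longrightarrow> W x y > 0 \<Longrightarrow> W y z > 0 \<Longrightarrow> W x z = 1"
  by (simp add: poset_kernel_def)

lemma poset_kernel_diag:
  assumes "poset_kernel M lt W"
  shows "W x x = 0"
proof -
  have "\<not> lt x x" and "\<And>x y. W x y > 0 \<Longrightarrow> lt x y"
    using assms by (auto simp: poset_kernel_def ordered_prob_space_def)
  then show ?thesis using poset_kernel_nonneg[OF assms, of x x] by force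
qed

lemma measurable_poset_kernel_comp:
  assumes "poset_kernel M lt W" and "f \<in> measurable N M" and "g \<in> measurable N M"
  shows "(\<lambda>\<omega>. W (f \<omega>) (g \<omega>)) \<in> borel_measurable N"
proof -
  have "(\<lambda>(x, y). W x y) \<in> borel_measurable (M \<Otimes>\<^sub>M M)"
    using assms(1) by (simp add: poset_kernel_def)
  from measurable_compose[OF measurable_Pair[OF assms(2,3)] this] show ?thesis by simp
qed

lemma prod_trancl_eq_prod:
  fixes w :: "'i \<times> 'i \<Rightarrow> real"
  assumes S: "finite S" and nonneg: "\<And>e. 0 \<le> w e"
    and trans: "\<And>a b c. w (a, b) > 0 \<Longrightarrow> w (b, c) > 0 \<Longrightarrow> w (a, c) = 1"
  shows "(\<Prod>e\<in>S\<^sup>+. w e) = (\<Prod>e\<in>S. w e)"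
proof (cases "\<exists>e\<in>S. w e = 0")
  case True
  then obtain e where "e \<in> S" "w e = 0" by blast
  moreover have "finite (S\<^sup>+)" using S by (simp add: finite_trancl)
  ultimately show ?thesis using S by (metis prod_zero_iff r_into_trancl')
next
  case False
  then have pos: "\<And>e. e \<in> S \<Longrightarrow> w e > 0" using nonneg by (metis less_eq_real_def)
  have closure_weight: "w (a, b) > 0 \<and> ((a, b) \<in> S \<or> w (a, b) = 1)" if "(a, b) \<in> S\<^sup>+" for a b
    using that
  proof (induction rule: trancl_induct)
    case (base y)
    then show ?case using pos by auto
  next
    case (step y z)
    then show ?case using trans pos by fastforce
  qed
  have "S \<subseteq> S\<^sup>+" and "finite (S\<^sup>+)" using S by (auto simp: finite_trancl)
  then have "(\<Prod>e\<in>S\<^sup>+. w e) = (\<Prod>e\<in>S\<^sup>+ - S. w e) * (\<Prod>e\<in>S. w e)"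
    by (rule prod.subset_diff)
  also have "(\<Prod>e\<in>S\<^sup>+ - S. w e) = 1"
    by (rule prod.neutral) (use closure_weight in auto)
  finally show ?thesis by simp
qed

abbreviation uniform01 :: "real measure" where
  "uniform01 \<equiv> uniform_measure lborel {0..1}"

lemma prob_space_uniform01: "prob_space uniform01"
  by (rule prob_space_uniform_measure) auto

lemma emeasure_uniform01_lessThan:
  assumes "0 \<le> w" "w \<le> 1"
  shows "emeasure uniform01 {..<w} = ennreal w"
proof -
  have "{0..1} \<inter> {..<w} = {0..<w}" using assms by auto
  then show ?thesis using assms by (simp add: emeasure_uniform_measure divide_ennreal_def)
qed

lemma emeasure_PiM_uniform01_all_less:
  assumes S: "finite S" and w: "\<And>p. p \<in> S \<Longrightarrow> 0 \<le> w p \<and> w p \<le> 1"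
  shows "emeasure (PiM UNIV (\<lambda>_. uniform01)) {\<xi>. \<forall>p\<in>S. \<xi> p < w p} = (\<Prod>p\<in>S. ennreal (w p))"
proof -
  have "{\<xi>. \<forall>p\<in>S. \<xi> p < w p} = prod_emb UNIV (\<lambda>_. uniform01) S (Pi\<^sub>E S (\<lambda>p. {..<w p}))"
    by (auto simp: prod_emb_def PiE_iff)
  also have "emeasure (PiM UNIV (\<lambda>_. uniform01)) \<dots> = (\<Prod>p\<in>S. emeasure uniform01 {..<w p})"
    by (rule emeasure_PiM_emb) (use prob_space_uniform01 S in auto)
  also have "\<dots> = (\<Prod>p\<in>S. ennreal (w p))"
    using w by (intro prod.cong refl emeasure_uniform01_lessThan) auto
  finally show ?thesis .
qed

lemma space_sample_space: "space (sample_space M) = space (PiM UNIV (\<lambda>_::nat. M)) \<times> UNIV"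
  by (simp add: sample_space_def space_pair_measure space_PiM PiE_UNIV_domain)

lemma prob_space_sample_space: "prob_space M \<Longrightarrow> prob_space (sample_space M)"
  unfolding sample_space_def
  by (intro prob_space_pair prob_space_PiM prob_space_uniform01)

lemma measurable_sample_vertex: "(\<lambda>\<omega>. fst \<omega> i) \<in> measurable (sample_space M) M"
  unfolding sample_space_def
  by (rule measurable_compose[OF measurable_fst measurable_component_singleton]) auto

lemma measurable_sample_uniform: "(\<lambda>\<omega>. snd \<omega> p) \<in> borel_measurable (sample_space M)"
proof -
  have "(\<lambda>\<omega>. snd \<omega> p) \<in> measurable (sample_space M) uniform01"
    unfolding sample_space_def
    by (rule measurable_compose[OF measurable_snd measurable_component_singleton]) auto
  then show ?thesis by (simp cong: measurable_cong_sets)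
qed

lemma pred_uniform_less_kernel:
  assumes "poset_kernel M lt W"
  shows "Measurable.pred (sample_space M) (\<lambda>\<omega>. snd \<omega> (i, j) < W (fst \<omega> i) (fst \<omega> j))"
  using measurable_poset_kernel_comp[OF assms measurable_sample_vertex measurable_sample_vertex]
    measurable_sample_uniform
  by measurable

lemma measurable_random_poset:
  assumes "poset_kernel M lt W"
  shows "random_poset n W \<in> measurable (sample_space M) (PiM UNIV (\<lambda>_. count_space UNIV))"
proof (rule measurable_PiM_single')
  fix p :: "nat \<times> nat"
  obtain i j where p: "p = (i, j)" by (cases p)
  show "(\<lambda>\<omega>. random_poset n W \<omega> p) \<in> measurable (sample_space M) (count_space UNIV)"
    using pred_uniform_less_kernel[OF assms, of i j]
    by (simp add: random_poset_def p pred_def)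
qed auto

lemma emeasure_sample_space_all_less:
  assumes K: "poset_kernel M lt W" and S: "finite S"
  shows "emeasure (sample_space M)
      {\<omega> \<in> space (sample_space M). \<forall>p\<in>S. snd \<omega> p < W (fst \<omega> (fst p)) (fst \<omega> (snd p))}
     = (\<integral>\<^sup>+x. ennreal (\<Prod>p\<in>S. W (x (fst p)) (x (snd p))) \<partial>PiM UNIV (\<lambda>_. M))"
proof -
  let ?E = "{\<omega> \<in> space (sample_space M). \<forall>p\<in>S. snd \<omega> p < W (fst \<omega> (fst p)) (fst \<omega> (snd p))}"
  let ?PX = "PiM UNIV (\<lambda>_::nat. M)" and ?PU = "PiM UNIV (\<lambda>_::nat \<times> nat. uniform01)"
  have E: "?E \<in> sets (sample_space M)"
    by (rule sets.sets_Collect_finite_All[OF _ S])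
       (use pred_uniform_less_kernel[OF K] in \<open>auto simp: pred_def\<close>)
  have "sigma_finite_measure ?PU"
    by (intro prob_space_imp_sigma_finite prob_space_PiM prob_space_uniform01)
  then have "emeasure (sample_space M) ?E = (\<integral>\<^sup>+x. emeasure ?PU (Pair x -` ?E) \<partial>?PX)"
    using sigma_finite_measure.emeasure_pair_measure_alt[of ?PU ?E ?PX] E
    by (simp add: sample_space_def)
  also have "\<dots> = (\<integral>\<^sup>+x. ennreal (\<Prod>p\<in>S. W (x (fst p)) (x (snd p))) \<partial>?PX)"
  proof (rule nn_integral_cong)
    fix x assume "x \<in> space ?PX"
    then have "Pair x -` ?E = {\<xi>. \<forall>p\<in>S. \<xi> p < W (x (fst p)) (x (snd p))}"
      by (auto simp: space_sample_space)
    then show "emeasure ?PU (Pair x -` ?E) = ennreal (\<Prod>p\<in>S. W (x (fst p)) (x (snd p)))"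
      using emeasure_PiM_uniform01_all_less[OF S, of "\<lambda>p. W (x (fst p)) (x (snd p))"]
        poset_kernel_nonneg[OF K] poset_kernel_le_1[OF K]
      by (simp add: prod_ennreal)
  qed
  finally show ?thesis .
qed

lemma bij_betw_map_prod_preimage:
  assumes g: "bij_betw g A B" and R: "R \<subseteq> B \<times> B"
  shows "bij_betw (map_prod g g) {(a, b). a \<in> A \<and> b \<in> A \<and> (g a, g b) \<in> R} R"
proof (rule bij_betw_subset[OF bij_betw_map_prod[OF g g]])
  show "map_prod g g ` {(a, b). a \<in> A \<and> b \<in> A \<and> (g a, g b) \<in> R} = R"
  proof
    show "R \<subseteq> map_prod g g ` {(a, b). a \<in> A \<and> b \<in> A \<and> (g a, g b) \<in> R}"
    proof
      fix e assume "e \<in> R"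
      moreover obtain p q where "e = (p, q)" by (cases e)
      moreover have "B = g ` A" using g by (simp add: bij_betw_def)
      ultimately show "e \<in> map_prod g g ` {(a, b). a \<in> A \<and> b \<in> A \<and> (g a, g b) \<in> R}"
        using R by force
    qed
  qed auto
qed auto

lemma borel_measurable_prod_poset_kernel:
  assumes K: "poset_kernel M lt W" and A: "A \<subseteq> I \<times> I"
  shows "(\<lambda>y. \<Prod>(a, b)\<in>A. W (y a) (y b)) \<in> borel_measurable (PiM I (\<lambda>_. M))"
proof (rule borel_measurable_prod)
  fix e assume "e \<in> A"
  then obtain a b where "e = (a, b)" "a \<in> I" "b \<in> I" using A by auto
  then show "(\<lambda>y. case e of (a, b) \<Rightarrow> W (y a) (y b)) \<in> borel_measurable (PiM I (\<lambda>_. M))"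
    by (auto intro!: measurable_poset_kernel_comp[OF K] measurable_component_singleton)
qed

lemma nn_integral_eq_hom_density:
  assumes K: "poset_kernel M lt W"
  shows "(\<integral>\<^sup>+y. ennreal (\<Prod>(i, j)\<in>{(i, j). i \<in> {1..k} \<and> j \<in> {1..k} \<and> Q i j}. W (y i) (y j))
            \<partial>PiM {1..k} (\<lambda>_. M))
       = ennreal (hom_density M W k Q)"
proof -
  let ?H = "\<lambda>y. \<Prod>(i, j)\<in>{(i, j). i \<in> {1..k} \<and> j \<in> {1..k} \<and> Q i j}. W (y i) (y j)"
  let ?PK = "PiM {1..k} (\<lambda>_. M)"
  have bounds: "0 \<le> ?H y" "?H y \<le> 1" for y
    using poset_kernel_nonneg[OF K] poset_kernel_le_1[OF K]
    by (auto intro!: prod_nonneg prod_le_1)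
  have "finite_measure ?PK"
    using prob_space_PiM[OF poset_kernel_prob_space[OF K]] unfolding prob_space_def by blast
  moreover have "?H \<in> borel_measurable ?PK"
    by (rule borel_measurable_prod_poset_kernel[OF K]) auto
  ultimately have "integrable ?PK ?H"
    using bounds by (intro finite_measure.integrable_const_bound[where B=1]) auto
  then show ?thesis
    unfolding hom_density_def by (rule nn_integral_eq_integral) (use bounds in auto)
qed

lemma nn_integral_prod_eq_hom_density_trancl:
  assumes K: "poset_kernel M lt W" and S: "finite S" and g: "bij_betw g {1..k} (Field S)"
  shows "(\<integral>\<^sup>+x. ennreal (\<Prod>p\<in>S. W (x (fst p)) (x (snd p))) \<partial>PiM UNIV (\<lambda>_. M))
       = ennreal (hom_density M W k (\<lambda>a b. (g a, g b) \<in> S\<^sup>+))"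
proof -
  let ?Qs = "{(a, b). a \<in> {1..k} \<and> b \<in> {1..k} \<and> (g a, g b) \<in> S\<^sup>+}"
  let ?H = "\<lambda>y. \<Prod>(a, b)\<in>?Qs. W (y a) (y b)"
  let ?PX = "PiM UNIV (\<lambda>_. M)" and ?PK = "PiM {1..k} (\<lambda>_::nat. M)"
  let ?T = "\<lambda>x. \<lambda>a\<in>{1..k}. x (g a)"
  have prod_eq: "(\<Prod>p\<in>S. W (x (fst p)) (x (snd p))) = ?H (?T x)" for x
  proof -
    have "(\<Prod>p\<in>S. W (x (fst p)) (x (snd p))) = (\<Prod>p\<in>S\<^sup>+. W (x (fst p)) (x (snd p)))"
      using poset_kernel_nonneg[OF K] poset_kernel_trans[OF K]
      by (intro prod_trancl_eq_prod[symmetric, OF S]) auto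
    also have "\<dots> = (\<Prod>e\<in>?Qs. W (x (fst (map_prod g g e))) (x (snd (map_prod g g e))))"
      using bij_betw_map_prod_preimage[OF g trancl_subset_Field2]
      by (rule prod.reindex_bij_betw[symmetric])
    also have "\<dots> = ?H (?T x)"
      by (intro prod.cong refl) auto
    finally show ?thesis .
  qed
  have T: "?T \<in> measurable ?PX ?PK"
    by (intro measurable_restrict measurable_component_singleton) auto
  have reindex: "distr ?PX ?PK ?T = ?PK"
    using distr_PiM_reindex[of UNIV "\<lambda>_. M" g "{1..k}"] poset_kernel_prob_space[OF K] g
    by (simp add: bij_betw_def)
  have H: "?H \<in> borel_measurable ?PK"
    by (rule borel_measurable_prod_poset_kernel[OF K]) auto
  have "(\<integral>\<^sup>+x. ennreal (\<Prod>p\<in>S. W (x (fst p)) (x (snd p))) \<partial>?PX) = (\<integral>\<^sup>+x. ennreal (?H (?T x)) \<partial>?PX)"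
    by (simp only: prod_eq)
  also have "\<dots> = (\<integral>\<^sup>+y. ennreal (?H y) \<partial>distr ?PX ?PK ?T)"
    by (rule nn_integral_distr[symmetric, OF T]) (use H in \<open>simp add: reindex\<close>)
  also have "\<dots> = ennreal (hom_density M W k (\<lambda>a b. (g a, g b) \<in> S\<^sup>+))"
    unfolding reindex by (rule nn_integral_eq_hom_density[OF K])
  finally show ?thesis .
qed

definition holds_on :: "'i set \<Rightarrow> ('i \<Rightarrow> bool) set" where
  "holds_on S = {f. \<forall>p\<in>S. f p}"

lemma holds_on_Int: "holds_on S \<inter> holds_on T = holds_on (S \<union> T)"
  by (auto simp: holds_on_def)

lemma holds_on_empty: "holds_on {} = UNIV"
  by (simp add: holds_on_def)

lemma holds_on_in_sets_PiM:
  fixes S :: "'i set"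
  assumes "finite S"
  shows "holds_on S \<in> sets (PiM UNIV (\<lambda>_. count_space UNIV))"
proof -
  have "{f \<in> space (PiM UNIV (\<lambda>_. count_space UNIV)). \<forall>p\<in>S. f p}
      \<in> sets (PiM UNIV (\<lambda>_::'i. count_space (UNIV :: bool set)))"
    by (rule sets.sets_Collect_finite_All[OF _ assms]) (simp add: pred_def)
  then show ?thesis by (simp add: holds_on_def space_PiM PiE_UNIV_domain)
qed

lemma sets_PiM_bool_eq_sigma_holds_on:
  "sets (PiM UNIV (\<lambda>_::'i. count_space (UNIV :: bool set)))
     = sigma_sets UNIV {holds_on S | S. finite S}"
proof -
  let ?G = "{holds_on S | S :: 'i set. finite S}"
  have generated: "sets (PiM UNIV (\<lambda>_::'i. count_space (UNIV :: bool set)))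
      = sigma_sets UNIV {{f. f i \<in> A} | i A. True}"
    unfolding sets_PiM_single by (simp add: PiE_UNIV_domain)
  also have "\<dots> = sigma_sets UNIV ?G"
  proof (rule sigma_sets_eqI)
    fix a :: "('i \<Rightarrow> bool) set" assume "a \<in> {{f. f i \<in> A} | i A. True}"
    then obtain i A where a: "a = {f. f i \<in> A}" by blast
    have true: "{f. f i} \<in> sigma_sets UNIV ?G"
      by (rule sigma_sets.Basic) (auto simp: holds_on_def intro!: exI[of _ "{i}"])
    then have false: "{f. \<not> f i} \<in> sigma_sets UNIV ?G"
      using sigma_sets.Compl[OF true] by (simp add: Compl_eq_Diff_UNIV[symmetric] Collect_neg_eq)
    have "a = (if True \<in> A then {f. f i} else {}) \<union> (if False \<in> A then {f. \<not> f i} else {})"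
      unfolding a by (auto; metis (full_types))
    then show "a \<in> sigma_sets UNIV ?G"
      using true false by (auto intro: sigma_sets_Un sigma_sets.Empty)
  next
    fix b assume "b \<in> ?G"
    then show "b \<in> sigma_sets UNIV {{f. f i \<in> A} | i A. True}"
      using holds_on_in_sets_PiM generated by auto
  qed
  finally show ?thesis .
qed

lemma PiM_bool_measure_eqI:
  fixes M N :: "('i \<Rightarrow> bool) measure"
  assumes sets_M: "sets M = sets (PiM UNIV (\<lambda>_. count_space UNIV))"
    and sets_N: "sets N = sets (PiM UNIV (\<lambda>_. count_space UNIV))"
    and fin: "finite_measure M"
    and eq: "\<And>S. finite S \<Longrightarrow> emeasure M (holds_on S) = emeasure N (holds_on S)"
  shows "M = N"
proof -
  let ?G = "{holds_on S | S :: 'i set. finite S}"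
  show ?thesis
  proof (rule measure_eqI_generator_eq[where E = ?G and \<Omega> = UNIV and A = "\<lambda>_. UNIV"])
    show "Int_stable ?G"
    proof (rule Int_stableI)
      fix a b assume "a \<in> ?G" "b \<in> ?G"
      then obtain S T :: "'i set" where "a = holds_on S" "b = holds_on T" "finite (S \<union> T)"
        by auto
      then show "a \<inter> b \<in> ?G" by (auto simp: holds_on_Int)
    qed
    show "range (\<lambda>_::nat. UNIV) \<subseteq> ?G"
      using holds_on_empty by blast
    show "emeasure M UNIV \<noteq> \<infinity>"
      using finite_measure.emeasure_finite[OF fin] sets_eq_imp_space_eq[OF sets_M]
      by (simp add: space_PiM PiE_UNIV_domain)
    show "sets M = sigma_sets UNIV ?G" "sets N = sigma_sets UNIV ?G"
      using sets_M sets_N sets_PiM_bool_eq_sigma_holds_on by simp_all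
    show "emeasure M X = emeasure N X" if "X \<in> ?G" for X
      using that eq by blast
  qed auto
qed

lemma emeasure_random_poset_law_holds_on:
  fixes S :: "(nat \<times> nat) set"
  assumes K: "poset_kernel M lt W" and S: "finite S" and g: "bij_betw g {1..k} (Field S)"
  shows "emeasure (random_poset_law M W n) (holds_on S) =
    (if S \<subseteq> label_set n \<times> label_set n
     then ennreal (hom_density M W k (\<lambda>a b. (g a, g b) \<in> S\<^sup>+)) else 0)"
proof -
  let ?E = "random_poset n W -` holds_on S \<inter> space (sample_space M)"
  have "emeasure (random_poset_law M W n) (holds_on S) = emeasure (sample_space M) ?E"
    unfolding random_poset_law_def
    by (rule emeasure_distr[OF measurable_random_poset[OF K] holds_on_in_sets_PiM[OF S]])
  moreover have "?E = {\<omega> \<in> space (sample_space M). \<forall>p\<in>S. snd \<omega> p < W (fst \<omega> (fst p)) (fst \<omega> (snd p))}"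
    if "S \<subseteq> label_set n \<times> label_set n"
    using that by (auto simp: random_poset_def holds_on_def)
  moreover have "?E = {}" if "\<not> S \<subseteq> label_set n \<times> label_set n"
    using that by (auto simp: random_poset_def holds_on_def)
  ultimately show ?thesis
    using emeasure_sample_space_all_less[OF K S] nn_integral_prod_eq_hom_density_trancl[OF K S g]
    by auto
qed

lemma prob_space_random_poset_law:
  assumes "poset_kernel M lt W"
  shows "prob_space (random_poset_law M W n)"
  unfolding random_poset_law_def
  by (rule prob_space.prob_space_distr[OF prob_space_sample_space measurable_random_poset])
     (use assms poset_kernel_prob_space in auto)

lemma hom_density_empty: "hom_density M W 0 Q = 1"
  by (simp add: hom_density_def PiM_empty)

lemma hom_density_eq_0_if_loop:
  assumes K: "poset_kernel M lt W" and a: "a \<in> {1..k}" "Q a a"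
  shows "hom_density M W k Q = 0"
proof -
  have "finite {(i, j). i \<in> {1..k} \<and> j \<in> {1..k} \<and> Q i j}"
    by (rule finite_subset[of _ "{1..k} \<times> {1..k}"]) auto
  moreover have "(a, a) \<in> {(i, j). i \<in> {1..k} \<and> j \<in> {1..k} \<and> Q i j}"
    using a by simp
  ultimately have "(\<Prod>(i, j)\<in>{(i, j). i \<in> {1..k} \<and> j \<in> {1..k} \<and> Q i j}. W (x i) (x j)) = 0" for x
    using poset_kernel_diag[OF K, of "x a"] by (subst prod_zero_iff) force+
  then show ?thesis by (simp add: hom_density_def)
qed

lemma hom_density_eq_if_transitive:
  assumes K1: "poset_kernel M1 less1 W1" and K2: "poset_kernel M2 less2 W2"
    and H: "\<forall>k Q. finite_poset_on k Q \<longrightarrow> hom_density M1 W1 k Q = hom_density M2 W2 k Q"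
    and trans: "\<forall>i\<in>{1..k}. \<forall>j\<in>{1..k}. \<forall>l\<in>{1..k}. Q i j \<longrightarrow> Q j l \<longrightarrow> Q i l"
  shows "hom_density M1 W1 k Q = hom_density M2 W2 k Q"
proof (cases "k = 0")
  case True
  then show ?thesis by (simp add: hom_density_empty)
next
  case False
  then have "1 \<le> k" by simp
  show ?thesis
  proof (cases "\<exists>a\<in>{1..k}. Q a a")
    case True
    then obtain a where "a \<in> {1..k}" "Q a a" by blast
    then show ?thesis by (simp add: hom_density_eq_0_if_loop[OF K1] hom_density_eq_0_if_loop[OF K2])
  next
    case False
    with \<open>1 \<le> k\<close> trans have "finite_poset_on k Q"
      unfolding finite_poset_on_def by blast
    then show ?thesis using H by simp
  qed
qed

theorem theorem1p8:
  fixes M1 :: "'a measure" and less1 :: "'a \<Rightarrow> 'a \<Rightarrow> bool" and W1 :: "'a \<Rightarrow> 'a \<Rightarrow> real"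
    and M2 :: "'b measure" and less2 :: "'b \<Rightarrow> 'b \<Rightarrow> bool" and W2 :: "'b \<Rightarrow> 'b \<Rightarrow> real"
    and n :: enat
  assumes "poset_kernel M1 less1 W1"
    and "poset_kernel M2 less2 W2"
    and "\<forall>k Q. finite_poset_on k Q \<longrightarrow> hom_density M1 W1 k Q = hom_density M2 W2 k Q"
  shows "random_poset_law M1 W1 n = random_poset_law M2 W2 n"
proof (rule PiM_bool_measure_eqI)
  show "finite_measure (random_poset_law M1 W1 n)"
    using prob_space_random_poset_law[OF assms(1)] unfolding prob_space_def by blast
  fix S :: "(nat \<times> nat) set"
  assume S: "finite S"
  obtain g where g: "bij_betw g {1..card (Field S)} (Field S)"
    using ex_bij_betw_nat_finite_1[OF finite_Field[OF S]] by blast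
  have "hom_density M1 W1 (card (Field S)) (\<lambda>a b. (g a, g b) \<in> S\<^sup>+)
      = hom_density M2 W2 (card (Field S)) (\<lambda>a b. (g a, g b) \<in> S\<^sup>+)"
    by (rule hom_density_eq_if_transitive[OF assms]) (meson trancl_trans)
  then show "emeasure (random_poset_law M1 W1 n) (holds_on S) = emeasure (random_poset_law M2 W2 n) (holds_on S)"
    using emeasure_random_poset_law_holds_on[OF assms(1) S g]
      emeasure_random_poset_law_holds_on[OF assms(2) S g]
    by simp
qed (simp_all add: random_poset_law_def)

end
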